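(* Let $f$ be a perfect coloring of $H(n,q)$ with quotient matrix $S$, and let $p$ be a positive integer. Then there exists a perfect coloring of $H(n,pq)$ with quotient matrix $pS+n(p-1)I$. In particular, if there is a $(b,c)$-coloring of $H(n,q)$, then there is a $(pb,pc)$-coloring of $H(n,pq)$.
   Context: The Hamming graph $H(n,q)$ has vertex set $\mathbb{Z}_q^n$, two vertices adjacent iff they differ in exactly one coordinate. A perfect $k$-coloring is a surjective map $f$ from the vertex set onto $\{1,\dots,k\}$ such that every vertex of color $i$ has exactly $s_{i,j}$ neighbours of color $j$ (constants depending only on $i,j$); $S=(s_{i,j})$ is the quotient matrix. $I$ is the identity matrix. A $(b,c)$-coloring of $H(n,q)$ is a perfect $2$-coloring with quotient matrix $\begin{pmatrix} n(q-1)-b & b\\ c & n(q-1)-c\end{pmatrix}$. *)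

theory Defs
  imports Main
begin

text \<open>Vertex set of the Hamming graph H(n,q): words of length n over {0..q-1},
  represented as functions nat => nat that vanish outside {0..n-1}.\<close>
definition hamming_vertices :: "nat \<Rightarrow> nat \<Rightarrow> (nat \<Rightarrow> nat) set" where
  "hamming_vertices n q = {x. (\<forall>i<n. x i < q) \<and> (\<forall>i\<ge>n. x i = 0)}"

definition hamming_adj :: "nat \<Rightarrow> (nat \<Rightarrow> nat) \<Rightarrow> (nat \<Rightarrow> nat) \<Rightarrow> bool" where
  "hamming_adj n x y \<longleftrightarrow> card {i. i < n \<and> x i \<noteq> y i} = 1"

text \<open>f is a perfect k-coloring of H(n,q) with quotient matrix S
  (colors 1..k; S i j for i,j in 1..k).\<close>
definition perfect_coloring ::
  "nat \<Rightarrow> nat \<Rightarrow> nat \<Rightarrow> ((nat \<Rightarrow> nat) \<Rightarrow> nat) \<Rightarrow> (nat \<Rightarrow> nat \<Rightarrow> nat) \<Rightarrow> bool" where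
  "perfect_coloring n q k f S \<longleftrightarrow>
     f ` hamming_vertices n q = {1..k} \<and>
     (\<forall>x\<in>hamming_vertices n q. \<forall>j\<in>{1..k}.
        card {y\<in>hamming_vertices n q. hamming_adj n x y \<and> f y = j} = S (f x) j)"

definition bc_coloring ::
  "nat \<Rightarrow> nat \<Rightarrow> nat \<Rightarrow> nat \<Rightarrow> ((nat \<Rightarrow> nat) \<Rightarrow> nat) \<Rightarrow> bool" where
  "bc_coloring n q b c f \<longleftrightarrow>
     perfect_coloring n q 2 f
       (\<lambda>i j. if i = 1 then (if j = 1 then n * (q - 1) - b else b)
              else (if j = 1 then c else n * (q - 1) - c))"

end

theory Submission
  imports Defs
begin

text \<open>Colour a vertex of H(n,pq) by the colour of its coordinatewise reduction modulo q.
  A neighbour of y in H(n,q) has exactly p lifts among the neighbours of any lift x of y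
  (same coordinate, p values congruent mod q), while in each of the n coordinates x has p - 1 further neighbours that
  reduce to y itself.\<close>

lemma mult_add_less_mult:
  fixes a w :: nat
  assumes "a < p" "w < q"
  shows "a * q + w < p * q"
proof -
  have "a * q + w < Suc a * q" using \<open>w < q\<close> by simp
  also have "\<dots> \<le> p * q" using \<open>a < p\<close> by (intro mult_le_mono1) simp
  finally show ?thesis .
qed

lemma card_mod_fibre:
  "card {v. v < p * q \<and> P (v mod q)} = p * card {w. w < (q::nat) \<and> P w}"
proof -
  let ?W = "{w. w < q \<and> P w}"
  have image: "{v. v < p * q \<and> P (v mod q)} = (\<lambda>(a, w). a * q + w) ` ({..<p} \<times> ?W)"
  proof (intro set_eqI iffI)
    fix v assume v: "v \<in> {v. v < p * q \<and> P (v mod q)}"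
    then have "0 < q" by (cases q) auto
    moreover have "v div q < p" using v by (simp add: less_mult_imp_div_less)
    ultimately show "v \<in> (\<lambda>(a, w). a * q + w) ` ({..<p} \<times> ?W)"
      using v by (auto intro!: image_eqI[of _ _ "(v div q, v mod q)"])
  qed (auto simp: mult_add_less_mult)
  have "inj_on (\<lambda>(a, w). a * q + w) ({..<p} \<times> ?W)"
    by (auto intro!: inj_onI)
      (metis add.commute mod_less mod_mult_self2 mult.commute div_mult_self1 div_less add_0
        less_nat_zero_code)+
  then show ?thesis
    unfolding image by (simp add: card_image card_cartesian_product)
qed

lemma card_mod_fibre_punctured:
  fixes p q a :: nat
  assumes "a < p * q" "p \<ge> 1"
  shows "card {v. v < p * q \<and> v \<noteq> a \<and> P (v mod q)} =
         p * card {w. w < q \<and> w \<noteq> a mod q \<and> P w} + (if P (a mod q) then p - 1 else 0)"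
proof (cases "P (a mod q)")
  case True
  have "0 < q" using assms by (cases q) auto
  have "{v. v < p * q \<and> P (v mod q)} = insert a {v. v < p * q \<and> v \<noteq> a \<and> P (v mod q)}"
    using True assms(1) by auto
  then have "card {v. v < p * q \<and> P (v mod q)} = Suc (card {v. v < p * q \<and> v \<noteq> a \<and> P (v mod q)})"
    by simp
  moreover have "{w. w < q \<and> P w} = insert (a mod q) {w. w < q \<and> w \<noteq> a mod q \<and> P w}"
    using True \<open>0 < q\<close> by auto
  then have "card {w. w < q \<and> P w} = Suc (card {w. w < q \<and> w \<noteq> a mod q \<and> P w})"
    by simp
  ultimately show ?thesis
    using card_mod_fibre[of p q P] True assms(2) by (cases p) auto
next
  case False
  then have "{v. v < p * q \<and> v \<noteq> a \<and> P (v mod q)} = {v. v < p * q \<and> P (v mod q)}"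
    and "{w. w < q \<and> w \<noteq> a mod q \<and> P w} = {w. w < q \<and> P w}"
    by auto
  then show ?thesis using card_mod_fibre[of p q P] False by simp
qed

lemma hamming_neighbours_eq_UN:
  assumes x: "x \<in> hamming_vertices n q"
  shows "{z \<in> hamming_vertices n q. hamming_adj n x z \<and> P z} =
         (\<Union>i<n. (\<lambda>v. x(i := v)) ` {v. v < q \<and> v \<noteq> x i \<and> P (x(i := v))})"
proof (intro set_eqI iffI)
  fix z assume "z \<in> {z \<in> hamming_vertices n q. hamming_adj n x z \<and> P z}"
  then have z: "z \<in> hamming_vertices n q" "card {i. i < n \<and> x i \<noteq> z i} = 1" "P z"
    by (auto simp: hamming_adj_def)
  then obtain i where i: "{i. i < n \<and> x i \<noteq> z i} = {i}"
    by (meson card_1_singletonE)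
  then have "i < n" "x i \<noteq> z i" by auto
  have "z l = (x(i := z i)) l" for l
    using i x z(1) by (cases "l < n") (auto simp: hamming_vertices_def)
  then have "z = x(i := z i)" ..
  moreover have "z i < q" using z(1) \<open>i < n\<close> by (auto simp: hamming_vertices_def)
  ultimately show "z \<in> (\<Union>i<n. (\<lambda>v. x(i := v)) ` {v. v < q \<and> v \<noteq> x i \<and> P (x(i := v))})"
    using \<open>i < n\<close> \<open>x i \<noteq> z i\<close> z(3) by (auto intro!: image_eqI[of _ _ "z i"])
next
  fix z assume "z \<in> (\<Union>i<n. (\<lambda>v. x(i := v)) ` {v. v < q \<and> v \<noteq> x i \<and> P (x(i := v))})"
  then obtain i v where iv: "i < n" "v < q" "v \<noteq> x i" "P (x(i := v))" "z = x(i := v)"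
    by auto
  then have "{l. l < n \<and> x l \<noteq> z l} = {i}" by auto
  then show "z \<in> {z \<in> hamming_vertices n q. hamming_adj n x z \<and> P z}"
    using x iv by (auto simp: hamming_adj_def hamming_vertices_def)
qed

lemma card_hamming_neighbours:
  assumes x: "x \<in> hamming_vertices n q"
  shows "card {z \<in> hamming_vertices n q. hamming_adj n x z \<and> P z} =
         (\<Sum>i<n. card {v. v < q \<and> v \<noteq> x i \<and> P (x(i := v))})"
proof -
  have upd_ne: "x(i := v) \<noteq> x(j := w)" if "i \<noteq> j" "v \<noteq> x i" for i j v w
    using that by (metis fun_upd_other fun_upd_same)
  have "card (\<Union>i<n. (\<lambda>v. x(i := v)) ` {v. v < q \<and> v \<noteq> x i \<and> P (x(i := v))}) =
        (\<Sum>i<n. card ((\<lambda>v. x(i := v)) ` {v. v < q \<and> v \<noteq> x i \<and> P (x(i := v))}))"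
    by (rule card_UN_disjoint) (auto dest: upd_ne)
  also have "\<dots> = (\<Sum>i<n. card {v. v < q \<and> v \<noteq> x i \<and> P (x(i := v))})"
    by (intro sum.cong refl card_image inj_onI) (metis fun_upd_same)
  finally show ?thesis
    unfolding hamming_neighbours_eq_UN[OF x] .
qed

lemma card_hamming_neighbours_le:
  assumes x: "x \<in> hamming_vertices n q"
  shows "card {z \<in> hamming_vertices n q. hamming_adj n x z \<and> P z} \<le> n * (q - 1)"
proof -
  have "card {v. v < q \<and> v \<noteq> x i \<and> P (x(i := v))} \<le> q - 1" if "i < n" for i
  proof -
    have "card {v. v < q \<and> v \<noteq> x i \<and> P (x(i := v))} \<le> card ({..<q} - {x i})"
      by (rule card_mono) auto
    also have "\<dots> = q - 1"
      using x that by (simp add: hamming_vertices_def)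
    finally show ?thesis .
  qed
  then have "(\<Sum>i<n. card {v. v < q \<and> v \<noteq> x i \<and> P (x(i := v))}) \<le> (\<Sum>i<n. q - 1)"
    by (intro sum_mono) simp
  then show ?thesis
    unfolding card_hamming_neighbours[OF x] by simp
qed

definition reduce_mod :: "nat \<Rightarrow> (nat \<Rightarrow> nat) \<Rightarrow> nat \<Rightarrow> nat" where
  "reduce_mod q x = (\<lambda>i. x i mod q)"

lemma reduce_mod_fun_upd: "reduce_mod q (x(i := v)) = (reduce_mod q x)(i := v mod q)"
  by (auto simp: reduce_mod_def)

lemma reduce_mod_in_hamming_vertices:
  assumes "x \<in> hamming_vertices n (p * q)"
  shows "reduce_mod q x \<in> hamming_vertices n q"
proof -
  have "x i mod q < q" if "i < n" for i
  proof -
    have "x i < p * q" using assms that by (simp add: hamming_vertices_def)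
    then have "0 < q" by (cases q) auto
    then show ?thesis by simp
  qed
  then show ?thesis
    using assms by (auto simp: hamming_vertices_def reduce_mod_def)
qed

lemma reduce_mod_image_hamming_vertices:
  assumes "p \<ge> 1"
  shows "reduce_mod q ` hamming_vertices n (p * q) = hamming_vertices n q"
proof (intro equalityI subsetI)
  fix y assume y: "y \<in> hamming_vertices n q"
  then have "y \<in> hamming_vertices n (p * q)"
    using assms by (auto simp: hamming_vertices_def intro: less_le_trans)
  moreover have "y i mod q = y i" for i
    using y by (cases "i < n") (auto simp: hamming_vertices_def)
  then have "reduce_mod q y = y"
    by (simp add: reduce_mod_def)
  ultimately show "y \<in> reduce_mod q ` hamming_vertices n (p * q)"
    by (metis image_eqI)
qed (auto intro: reduce_mod_in_hamming_vertices)

lemma card_hamming_neighbours_reduce_mod: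
  assumes x: "x \<in> hamming_vertices n (p * q)" and p: "p \<ge> 1"
  shows "card {z \<in> hamming_vertices n (p * q). hamming_adj n x z \<and> P (reduce_mod q z)} =
         p * card {z \<in> hamming_vertices n q. hamming_adj n (reduce_mod q x) z \<and> P z}
         + (if P (reduce_mod q x) then n * (p - 1) else 0)"
proof -
  let ?y = "reduce_mod q x"
  have coordinate: "card {v. v < p * q \<and> v \<noteq> x i \<and> P (reduce_mod q (x(i := v)))} =
      p * card {w. w < q \<and> w \<noteq> ?y i \<and> P (?y(i := w))} + (if P ?y then p - 1 else 0)"
    if "i < n" for i
  proof -
    have "x i < p * q" using x that by (simp add: hamming_vertices_def)
    moreover have "?y i = x i mod q" "?y(i := x i mod q) = ?y"
      by (auto simp: reduce_mod_def)
    ultimately show ?thesis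
      using card_mod_fibre_punctured[OF _ p, where a = "x i" and P = "\<lambda>w. P (?y(i := w))"]
      by (simp add: reduce_mod_fun_upd)
  qed
  have "card {z \<in> hamming_vertices n (p * q). hamming_adj n x z \<and> P (reduce_mod q z)} =
        (\<Sum>i<n. p * card {w. w < q \<and> w \<noteq> ?y i \<and> P (?y(i := w))} + (if P ?y then p - 1 else 0))"
    unfolding card_hamming_neighbours[OF x] by (intro sum.cong refl) (simp add: coordinate)
  also have "\<dots> = p * (\<Sum>i<n. card {w. w < q \<and> w \<noteq> ?y i \<and> P (?y(i := w))})
                  + (if P ?y then n * (p - 1) else 0)"
    by (simp add: sum.distrib sum_distrib_left)
  finally show ?thesis
    unfolding card_hamming_neighbours[OF reduce_mod_in_hamming_vertices[OF x]] .
qed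

lemma perfect_coloring_reduce_mod:
  assumes p: "p \<ge> 1" and f: "perfect_coloring n q k f S"
  shows "perfect_coloring n (p * q) k (\<lambda>x. f (reduce_mod q x))
           (\<lambda>i j. p * S i j + (if i = j then n * (p - 1) else 0))"
  unfolding perfect_coloring_def
proof (intro conjI ballI)
  show "(\<lambda>x. f (reduce_mod q x)) ` hamming_vertices n (p * q) = {1..k}"
    using f by (simp add: image_image[symmetric] reduce_mod_image_hamming_vertices[OF p]
        perfect_coloring_def)
next
  fix x j assume x: "x \<in> hamming_vertices n (p * q)" and j: "j \<in> {1..k}"
  have "card {z \<in> hamming_vertices n q. hamming_adj n (reduce_mod q x) z \<and> f z = j} =
        S (f (reduce_mod q x)) j"
    using f j reduce_mod_in_hamming_vertices[OF x] by (simp add: perfect_coloring_def)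
  then show "card {z \<in> hamming_vertices n (p * q). hamming_adj n x z \<and> f (reduce_mod q z) = j} =
             p * S (f (reduce_mod q x)) j + (if f (reduce_mod q x) = j then n * (p - 1) else 0)"
    using card_hamming_neighbours_reduce_mod[OF x p, where P = "\<lambda>c. f c = j"] by simp
qed

lemma perfect_coloring_cong:
  assumes "perfect_coloring n q k f S"
    and "\<And>i j. i \<in> {1..k} \<Longrightarrow> j \<in> {1..k} \<Longrightarrow> S i j = S' i j"
  shows "perfect_coloring n q k f S'"
proof -
  have "f x \<in> {1..k}" if "x \<in> hamming_vertices n q" for x
    using assms(1) that unfolding perfect_coloring_def by blast
  then show ?thesis
    using assms unfolding perfect_coloring_def by auto
qed

lemma scaled_complement_eq:
  fixes n p q t :: nat
  assumes "p \<ge> 1" "q \<ge> 1" "t \<le> n * (q - 1)"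
  shows "p * (n * (q - 1) - t) + n * (p - 1) = n * (p * q - 1) - p * t"
proof -
  have "p * q - 1 = p * (q - 1) + (p - 1)"
    using assms(1,2) by (simp add: diff_mult_distrib2 algebra_simps)
  then have "n * (p * q - 1) = p * (n * (q - 1)) + n * (p - 1)"
    by (simp add: algebra_simps)
  moreover have "p * t \<le> p * (n * (q - 1))"
    using assms(3) by simp
  ultimately show ?thesis
    by (simp only: diff_mult_distrib2) linarith
qed
lemma bc_coloring_reduce_mod:
  assumes p: "p \<ge> 1" and h: "bc_coloring n q b c h"
  shows "bc_coloring n (p * q) (p * b) (p * c) (\<lambda>x. h (reduce_mod q x))"
proof -
  define S where "S = (\<lambda>i j. if i = (1::nat) then (if j = (1::nat) then n * (q - 1) - b else b)
                              else (if j = 1 then c else n * (q - 1) - c))"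
  have pc: "perfect_coloring n q 2 h S"
    using h unfolding bc_coloring_def S_def .
  have "1 \<in> h ` hamming_vertices n q" "2 \<in> h ` hamming_vertices n q"
    using pc unfolding perfect_coloring_def by auto
  then obtain x1 x2 where x1: "x1 \<in> hamming_vertices n q" "h x1 = 1"
    and x2: "x2 \<in> hamming_vertices n q" "h x2 = 2"
    by (metis imageE)
  have "b = card {y \<in> hamming_vertices n q. hamming_adj n x1 y \<and> h y = 2}"
    using pc x1 unfolding perfect_coloring_def S_def by auto
  then have b: "b \<le> n * (q - 1)"
    using card_hamming_neighbours_le[OF x1(1)] by simp
  have "c = card {y \<in> hamming_vertices n q. hamming_adj n x2 y \<and> h y = 1}"
    using pc x2 unfolding perfect_coloring_def S_def by auto
  then have c: "c \<le> n * (q - 1)"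
    using card_hamming_neighbours_le[OF x2(1)] by simp
  have complement: "p * (n * (q - 1) - t) + n * (p - 1) = n * (p * q - 1) - p * t"
    if "t \<le> n * (q - 1)" for t
  proof (cases "q = 0")
    case True
    then have "n = 0" using x1(1) by (auto simp: hamming_vertices_def)
    then show ?thesis by simp
  next
    case False
    then show ?thesis using scaled_complement_eq[OF p _ that] by simp
  qed
  show ?thesis
    unfolding bc_coloring_def
  proof (rule perfect_coloring_cong[OF perfect_coloring_reduce_mod[OF p pc]])
    fix i j :: nat assume "i \<in> {1..2}" "j \<in> {1..2}"
    then have "i = 1 \<or> i = 2" "j = 1 \<or> j = 2" by auto
    then show "p * S i j + (if i = j then n * (p - 1) else 0) =
      (if i = 1 then if j = 1 then n * (p * q - 1) - p * b else p * b
       else if j = 1 then p * c else n * (p * q - 1) - p * c)"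
      using complement[OF b] complement[OF c] by (auto simp: S_def)
  qed
qed

theorem theorem5:
  fixes n q k p :: nat and f :: "(nat \<Rightarrow> nat) \<Rightarrow> nat" and S :: "nat \<Rightarrow> nat \<Rightarrow> nat"
  assumes "p \<ge> 1"
  shows "(perfect_coloring n q k f S \<longrightarrow>
            (\<exists>g. perfect_coloring n (p * q) k g
                   (\<lambda>i j. p * S i j + (if i = j then n * (p - 1) else 0))))
       \<and> (\<forall>b c. (\<exists>h. bc_coloring n q b c h) \<longrightarrow>
                 (\<exists>g. bc_coloring n (p * q) (p * b) (p * c) g))"
  using perfect_coloring_reduce_mod[OF assms] bc_coloring_reduce_mod[OF assms] by blast

end
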